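(* Let $N>0$, $m>0$, $F>0$, $\alpha>0$, $w>0$, $\tau\in(0,1)$, $g\geq 0$, $L_g\geq 0$, and define \[ L=\frac{N\left[(1-\tau)(mL_g+\alpha F)+(mg+F)mN\right]}{\alpha+(Nm-\alpha)\tau},\qquad q=\frac{(1-\tau)(L+L_g-\alpha g)}{\left(Nm+\alpha(1-\tau)\right)(L+L_g)}, \] \[ p=\frac{L+L_g}{L+L_g-\alpha g}\left(mw+\frac{\alpha(1-\tau)w}{N}\right). \] If $Nm>\alpha$, then $p-mw>0$.
   Context: These are the symmetric-equilibrium quantities of a monopolistic-competition general equilibrium model: $N$ is the measure of firms, $m$ and $F$ the marginal and fixed labor inputs, $\alpha$ the CARA utility parameter, $w$ the nominal wage, $\tau$ the income tax rate, $g$ the government purchase of each variety, $L_g$ government employment, $L$ private employment, $q$ per-capita consumption of each variety, $p$ the common price (so $mw$ is marginal cost). *)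

theory Defs
  imports Complex_Main
begin

end

theory Submission
  imports Defs
begin

text \<open>Because \<open>N m > \<alpha>\<close>, the denominator \<open>\<alpha> + (N m - \<alpha>) \<tau>\<close> of \<open>L\<close> lies in \<open>(0, N m]\<close>,
  while the numerator of \<open>L\<close> strictly exceeds \<open>(N m)\<^sup>2 g\<close>; hence \<open>L > \<alpha> g\<close>. Then the factor
  \<open>(L + L\<^sub>g) / (L + L\<^sub>g - \<alpha> g)\<close> is at least \<open>1\<close>, so \<open>p\<close> is at least the pure markup price
  \<open>m w + \<alpha> (1 - \<tau>) w / N\<close>, which exceeds marginal cost \<open>m w\<close>.\<close>

lemma interpolation_pos_le:
  fixes a b t :: "'a :: linordered_field"
  assumes "0 < a" and "a \<le> b" and "0 \<le> t" and "t \<le> 1"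
  shows "0 < a + (b - a) * t" and "a + (b - a) * t \<le> b"
proof -
  show "0 < a + (b - a) * t"
    using assms by (simp add: add_pos_nonneg)
  have "(b - a) * t \<le> (b - a) * 1"
    using assms by (intro mult_left_mono) auto
  then show "a + (b - a) * t \<le> b" by simp
qed

lemma private_employment_gt_government_cost:
  fixes N m F \<alpha> \<tau> g L\<^sub>g :: real
  assumes "N > 0" and "m > 0" and "F > 0" and "\<alpha> > 0"
    and "0 < \<tau>" and "\<tau> < 1" and "g \<ge> 0" and "L\<^sub>g \<ge> 0" and "N * m > \<alpha>"
  shows "N * ((1 - \<tau>) * (m * L\<^sub>g + \<alpha> * F) + (m * g + F) * m * N)
           / (\<alpha> + (N * m - \<alpha>) * \<tau>) > \<alpha> * g"
proof -
  define D where "D = \<alpha> + (N * m - \<alpha>) * \<tau>"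
  have D_pos: "0 < D" and D_le: "D \<le> N * m"
    using interpolation_pos_le[of \<alpha> "N * m" \<tau>] assms unfolding D_def by auto
  have "0 \<le> N * ((1 - \<tau>) * (m * L\<^sub>g + \<alpha> * F))" and "0 < N * (F * m * N)"
    using assms by (intro mult_nonneg_nonneg add_nonneg_nonneg; simp) (simp add: assms)
  then have numerator_excess_pos: "0 < N * ((1 - \<tau>) * (m * L\<^sub>g + \<alpha> * F)) + N * (F * m * N)"
    by linarith
  have "\<alpha> * g * D \<le> (N * m) * g * (N * m)"
    using assms D_pos D_le by (intro mult_mono mult_right_mono) auto
  also have "\<dots> < N * ((1 - \<tau>) * (m * L\<^sub>g + \<alpha> * F)) + N * (F * m * N) + (N * m) * g * (N * m)"
    using numerator_excess_pos by linarith
  also have "\<dots> = N * ((1 - \<tau>) * (m * L\<^sub>g + \<alpha> * F) + (m * g + F) * m * N)"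
    by (simp add: algebra_simps)
  finally show ?thesis
    using D_pos unfolding D_def[symmetric] by (simp add: less_divide_eq)
qed

theorem proposition3:
  fixes N m F \<alpha> w \<tau> g L\<^sub>g L q p :: real
  assumes "N > 0" and "m > 0" and "F > 0" and "\<alpha> > 0" and "w > 0"
    and "0 < \<tau>" and "\<tau> < 1" and "g \<ge> 0" and "L\<^sub>g \<ge> 0"
    and L_def: "L = N * ((1 - \<tau>) * (m * L\<^sub>g + \<alpha> * F) + (m * g + F) * m * N)
                    / (\<alpha> + (N * m - \<alpha>) * \<tau>)"
    and q_def: "q = (1 - \<tau>) * (L + L\<^sub>g - \<alpha> * g)
                    / ((N * m + \<alpha> * (1 - \<tau>)) * (L + L\<^sub>g))"
    and p_def: "p = (L + L\<^sub>g) / (L + L\<^sub>g - \<alpha> * g)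
                    * (m * w + \<alpha> * (1 - \<tau>) * w / N)"
    and "N * m > \<alpha>"
  shows "p - m * w > 0"
proof -
  have "L > \<alpha> * g"
    unfolding L_def using private_employment_gt_government_cost assms by blast
  then have factor_ge_one: "1 \<le> (L + L\<^sub>g) / (L + L\<^sub>g - \<alpha> * g)"
    using \<open>L\<^sub>g \<ge> 0\<close> \<open>g \<ge> 0\<close> \<open>\<alpha> > 0\<close> by (simp add: le_divide_eq_1)
  have cost_pos: "0 < m * w"
    using assms by simp
  have markup_gt_cost: "m * w < m * w + \<alpha> * (1 - \<tau>) * w / N"
    using assms by simp
  also have "\<dots> \<le> p"
  proof -
    have "0 \<le> m * w + \<alpha> * (1 - \<tau>) * w / N"
      using cost_pos markup_gt_cost by linarith
    from mult_right_mono[OF factor_ge_one this] show ?thesis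
      unfolding p_def by (simp only: mult_1)
  qed
  finally show ?thesis by simp
qed

end
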